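(* Assume that the subquiver $Q^d$ is connected and is not the quiver with one vertex and no arrows. Let $\chi\in M^+_{\mathbb{R}}$ with $r(\chi)=r>\frac12$, and let $\lambda$ be the antidominant cocharacter of $SG(d)$ with $\chi\in F_r(\lambda)^{\mathrm{int}}$. Let $I$ be a non-empty sub-multiset of $\{\beta\in\mathcal{W}:\langle\lambda,\beta\rangle<0\}$ and let $\sigma_I$ be the sum of its elements. Then $\chi-\sigma_I\in r\mathbb{W}$. If $\chi-\sigma_I$ lies on $F_r(\mu)^{\mathrm{int}}$ for a cocharacter $\mu$, then $\mu<\lambda$. In particular, \[(r,p)(\chi-\sigma_I)<(r,p)(\chi).\]
   Context: Let $Q=(I,E)$ be a symmetric quiver (for all $i,j$ the number of arrows $i\to j$ equals the number $j\to i$), with source and target maps $s,t$. Fix $d\in\mathbb{N}^I$; $Q^d$ is the subquiver on vertices $i$ with $d_i\neq0$. Let $R(d)=\bigoplus_{a\in E}\mathrm{Hom}(\mathbb{C}^{d_{s(a)}},\mathbb{C}^{d_{t(a)}})$, $G(d)=\prod_i GL(d_i)$ acting by conjugation. Let $M=\bigoplus_{i\in I,1\le j\le d_i}\mathbb{Z}\beta^i_j$ be the weight lattice of the diagonal torus, $M_{\mathbb{R}}=M\otimes\mathbb{R}$, $N$ the dual lattice, $\langle\,,\rangle$ the pairing. Positive roots: $\beta^i_a-\beta^i_b$, $a<b$; $M^+_{\mathbb{R}}$ is the set of dominant real weights $\sum x^i_j\beta^i_j$ with $x^i_1\ge\cdots\ge x^i_{d_i}$. A cocharacter of $SG(d)$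 means $\lambda\in N$ with $\langle\lambda,\sum_{i,j}\beta^i_j\rangle=0$; antidominant means $\lambda^i_1\le\cdots\le\lambda^i_{d_i}$ for all $i$. Let $\mathcal{W}$ be the multiset of torus weights of $R(d)$ (for each arrow $a:i\to j$ and $x\le d_i$, $y\le d_j$, the weight $\beta^j_y-\beta^i_x$). Let $\tau_d=(\sum_{i,j}\beta^i_j)/(\sum_i d_i)$ and $\mathbb{W}=\sum_{\beta\in\mathcal{W}}[0,\beta]+\mathbb{R}\tau_d$ (Minkowski sum). For $\chi\in M_{\mathbb{R}}$, $r(\chi)$ is the smallest $r\ge0$ with $\chi\in r\mathbb{W}$; if $r(\chi)=r$, writing $\chi=\sum_{\beta\in\mathcal{W}}c_\beta\beta+c\tau_d$ with $c\in\mathbb{R}$, $-r\le c_\beta\le0$, the $p$-invariant $p(\chi)$ is the smallest number of coefficients $c_\beta$ equal to $-r$ in such an expression; $(r,p)(\chi)=(r(\chi),p(\chi))$, and pairs are compared lexicographically. Set $N^{\lambda>0}:=\sum_{\beta\in\mathcal{W},\,\langle\lambda,\beta\rangle>0}\beta$; $F_r(\lambda)=\{\psi\in r\mathbb{W}:\langle\lambda,\psi\rangle+r\langle\lambda,N^{\lambda>0}\rangle=0\}$. Write $\mu\ge\lambda$ if every $\beta\in\mathcal{W}$ with $\langle\lambda,\beta\rangle>0$ satisfies $\langle\mu,\beta\rangle>0$; $\mu>\lambda$ (equivalently $\lambda<\mu$) if $\mu\ge\lambda$ but not $\lambda\ge\mu$. Let $F_r(\lambda)^{\mathrm{int}}:=F_r(\lambda)\setminus\bigcup_{\mu>\lambda}F_r(\mu)$.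 *)

theory Defs
  imports Complex_Main
begin

text \<open>The weight lattice M (resp. M_R) is modelled by functions on the index set
  idx I d = {(i,j). i in I, 1 <= j <= d i} (basis vectors beta^i_j); cocharacters
  (elements of N) are integer-valued functions; the pairing is the sum over idx.
  The multiset of weights of R(d) is indexed by labels (a,x,y) with weight
  beta^{t a}_y - beta^{s a}_x.\<close>

definition idx :: "'v set \<Rightarrow> ('v \<Rightarrow> nat) \<Rightarrow> ('v \<times> nat) set" where
  "idx I d = {(i,j). i \<in> I \<and> 1 \<le> j \<and> j \<le> d i}"

definition labels :: "'e set \<Rightarrow> ('e \<Rightarrow> 'v) \<Rightarrow> ('e \<Rightarrow> 'v) \<Rightarrow> ('v \<Rightarrow> nat) \<Rightarrow> ('e \<times> nat \<times> nat) set" where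
  "labels E s t d = {(a,x,y). a \<in> E \<and> 1 \<le> x \<and> x \<le> d (s a) \<and> 1 \<le> y \<and> y \<le> d (t a)}"

definition wt :: "('e \<Rightarrow> 'v) \<Rightarrow> ('e \<Rightarrow> 'v) \<Rightarrow> 'e \<times> nat \<times> nat \<Rightarrow> ('v \<times> nat \<Rightarrow> real)" where
  "wt s t l = (case l of (a,x,y) \<Rightarrow>
     (\<lambda>k. (if k = (t a, y) then 1 else 0) - (if k = (s a, x) then 1 else 0)))"

definition tau :: "'v set \<Rightarrow> ('v \<Rightarrow> nat) \<Rightarrow> ('v \<times> nat \<Rightarrow> real)" where
  "tau I d = (\<lambda>k. if k \<in> idx I d then 1 / real (\<Sum>i\<in>I. d i) else 0)"

definition pair :: "'v set \<Rightarrow> ('v \<Rightarrow> nat) \<Rightarrow> ('v \<times> nat \<Rightarrow> int) \<Rightarrow> ('v \<times> nat \<Rightarrow> real) \<Rightarrow> real" where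
  "pair I d lam chi = (\<Sum>k\<in>idx I d. real_of_int (lam k) * chi k)"

definition rW :: "'v set \<Rightarrow> 'e set \<Rightarrow> ('e \<Rightarrow> 'v) \<Rightarrow> ('e \<Rightarrow> 'v) \<Rightarrow> ('v \<Rightarrow> nat) \<Rightarrow> real
    \<Rightarrow> ('v \<times> nat \<Rightarrow> real) set" where
  "rW I E s t d r = {(\<lambda>k. (\<Sum>l\<in>labels E s t d. c l * wt s t l k) + cc * tau I d k) | c cc.
       \<forall>l\<in>labels E s t d. 0 \<le> c l \<and> c l \<le> r}"

definition r_inv :: "'v set \<Rightarrow> 'e set \<Rightarrow> ('e \<Rightarrow> 'v) \<Rightarrow> ('e \<Rightarrow> 'v) \<Rightarrow> ('v \<Rightarrow> nat)
    \<Rightarrow> ('v \<times> nat \<Rightarrow> real) \<Rightarrow> real" where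
  "r_inv I E s t d chi = (LEAST r::real. 0 \<le> r \<and> chi \<in> rW I E s t d r)"

definition p_inv :: "'v set \<Rightarrow> 'e set \<Rightarrow> ('e \<Rightarrow> 'v) \<Rightarrow> ('e \<Rightarrow> 'v) \<Rightarrow> ('v \<Rightarrow> nat)
    \<Rightarrow> ('v \<times> nat \<Rightarrow> real) \<Rightarrow> nat" where
  "p_inv I E s t d chi = (let r = r_inv I E s t d chi in
     (LEAST n::nat. \<exists>c cc. (\<forall>l\<in>labels E s t d. - r \<le> c l \<and> c l \<le> 0) \<and>
        chi = (\<lambda>k. (\<Sum>l\<in>labels E s t d. c l * wt s t l k) + cc * tau I d k) \<and>
        card {l\<in>labels E s t d. c l = - r} = n))"

definition rp_less :: "real \<times> nat \<Rightarrow> real \<times> nat \<Rightarrow> bool" where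
  "rp_less a b \<longleftrightarrow> fst a < fst b \<or> (fst a = fst b \<and> snd a < snd b)"

definition Npos :: "'v set \<Rightarrow> 'e set \<Rightarrow> ('e \<Rightarrow> 'v) \<Rightarrow> ('e \<Rightarrow> 'v) \<Rightarrow> ('v \<Rightarrow> nat)
    \<Rightarrow> ('v \<times> nat \<Rightarrow> int) \<Rightarrow> ('v \<times> nat \<Rightarrow> real)" where
  "Npos I E s t d lam = (\<lambda>k. \<Sum>l\<in>{l\<in>labels E s t d. pair I d lam (wt s t l) > 0}. wt s t l k)"

definition Fr :: "'v set \<Rightarrow> 'e set \<Rightarrow> ('e \<Rightarrow> 'v) \<Rightarrow> ('e \<Rightarrow> 'v) \<Rightarrow> ('v \<Rightarrow> nat) \<Rightarrow> real
    \<Rightarrow> ('v \<times> nat \<Rightarrow> int) \<Rightarrow> ('v \<times> nat \<Rightarrow> real) set" where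
  "Fr I E s t d r lam = {psi \<in> rW I E s t d r.
      pair I d lam psi + r * pair I d lam (Npos I E s t d lam) = 0}"

definition cocha_geq :: "'v set \<Rightarrow> 'e set \<Rightarrow> ('e \<Rightarrow> 'v) \<Rightarrow> ('e \<Rightarrow> 'v) \<Rightarrow> ('v \<Rightarrow> nat)
    \<Rightarrow> ('v \<times> nat \<Rightarrow> int) \<Rightarrow> ('v \<times> nat \<Rightarrow> int) \<Rightarrow> bool" where
  "cocha_geq I E s t d mu lam \<longleftrightarrow>
     (\<forall>l\<in>labels E s t d. pair I d lam (wt s t l) > 0 \<longrightarrow> pair I d mu (wt s t l) > 0)"

definition cocha_gt :: "'v set \<Rightarrow> 'e set \<Rightarrow> ('e \<Rightarrow> 'v) \<Rightarrow> ('e \<Rightarrow> 'v) \<Rightarrow> ('v \<Rightarrow> nat)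
    \<Rightarrow> ('v \<times> nat \<Rightarrow> int) \<Rightarrow> ('v \<times> nat \<Rightarrow> int) \<Rightarrow> bool" where
  "cocha_gt I E s t d mu lam \<longleftrightarrow>
     cocha_geq I E s t d mu lam \<and> \<not> cocha_geq I E s t d lam mu"

definition cochar_SG :: "'v set \<Rightarrow> ('v \<Rightarrow> nat) \<Rightarrow> ('v \<times> nat \<Rightarrow> int) \<Rightarrow> bool" where
  "cochar_SG I d mu \<longleftrightarrow> (\<forall>k. k \<notin> idx I d \<longrightarrow> mu k = 0) \<and> (\<Sum>k\<in>idx I d. mu k) = 0"

definition antidominant :: "'v set \<Rightarrow> ('v \<Rightarrow> nat) \<Rightarrow> ('v \<times> nat \<Rightarrow> int) \<Rightarrow> bool" where
  "antidominant I d lam \<longleftrightarrow>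
     (\<forall>i\<in>I. \<forall>j1 j2. 1 \<le> j1 \<longrightarrow> j1 \<le> j2 \<longrightarrow> j2 \<le> d i \<longrightarrow> lam (i,j1) \<le> lam (i,j2))"

definition dominant_weight :: "'v set \<Rightarrow> ('v \<Rightarrow> nat) \<Rightarrow> ('v \<times> nat \<Rightarrow> real) \<Rightarrow> bool" where
  "dominant_weight I d chi \<longleftrightarrow> (\<forall>k. k \<notin> idx I d \<longrightarrow> chi k = 0) \<and>
     (\<forall>i\<in>I. \<forall>j1 j2. 1 \<le> j1 \<longrightarrow> j1 \<le> j2 \<longrightarrow> j2 \<le> d i \<longrightarrow> chi (i,j2) \<le> chi (i,j1))"

definition Fr_int :: "'v set \<Rightarrow> 'e set \<Rightarrow> ('e \<Rightarrow> 'v) \<Rightarrow> ('e \<Rightarrow> 'v) \<Rightarrow> ('v \<Rightarrow> nat) \<Rightarrow> real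
    \<Rightarrow> ('v \<times> nat \<Rightarrow> int) \<Rightarrow> ('v \<times> nat \<Rightarrow> real) set" where
  "Fr_int I E s t d r lam = Fr I E s t d r lam -
     (\<Union>mu\<in>{mu. cochar_SG I d mu \<and> cocha_gt I E s t d mu lam}. Fr I E s t d r mu)"

definition symmetric_quiver :: "'v set \<Rightarrow> 'e set \<Rightarrow> ('e \<Rightarrow> 'v) \<Rightarrow> ('e \<Rightarrow> 'v) \<Rightarrow> bool" where
  "symmetric_quiver I E s t \<longleftrightarrow> finite I \<and> finite E \<and> (\<forall>a\<in>E. s a \<in> I \<and> t a \<in> I) \<and>
     (\<forall>i j. card {a\<in>E. s a = i \<and> t a = j} = card {a\<in>E. s a = j \<and> t a = i})"

definition supp_vertices :: "'v set \<Rightarrow> ('v \<Rightarrow> nat) \<Rightarrow> 'v set" where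
  "supp_vertices I d = {i\<in>I. d i \<noteq> 0}"

definition supp_arrows :: "'v set \<Rightarrow> 'e set \<Rightarrow> ('e \<Rightarrow> 'v) \<Rightarrow> ('e \<Rightarrow> 'v) \<Rightarrow> ('v \<Rightarrow> nat) \<Rightarrow> 'e set" where
  "supp_arrows I E s t d = {a\<in>E. s a \<in> supp_vertices I d \<and> t a \<in> supp_vertices I d}"

definition Qd_connected :: "'v set \<Rightarrow> 'e set \<Rightarrow> ('e \<Rightarrow> 'v) \<Rightarrow> ('e \<Rightarrow> 'v) \<Rightarrow> ('v \<Rightarrow> nat) \<Rightarrow> bool" where
  "Qd_connected I E s t d \<longleftrightarrow> supp_vertices I d \<noteq> {} \<and>
     (\<forall>i\<in>supp_vertices I d. \<forall>j\<in>supp_vertices I d.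
        (\<lambda>u v. \<exists>a\<in>supp_arrows I E s t d. (s a = u \<and> t a = v) \<or> (s a = v \<and> t a = u))\<^sup>*\<^sup>* i j)"

definition Qd_trivial :: "'v set \<Rightarrow> 'e set \<Rightarrow> ('e \<Rightarrow> 'v) \<Rightarrow> ('e \<Rightarrow> 'v) \<Rightarrow> ('v \<Rightarrow> nat) \<Rightarrow> bool" where
  "Qd_trivial I E s t d \<longleftrightarrow> card (supp_vertices I d) = 1 \<and> supp_arrows I E s t d = {}"

end

theory Submission
  imports Defs "HOL-Analysis.Analysis"
begin

(*
  Reversing arrows gives a bijection rho of the weight multiset with beta (rho l) = - beta l, so
  r W is also the set of sums of c_beta beta + c tau_d with -r <= c_beta <= 0, and such a point
  lies on F_r(mu) exactly when c_beta = -r on the mu-positive and c_beta = 0 on the mu-negative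
  weights. Write chi in this form with p(chi) coefficients equal to -r. Then c = 0 on I and
  c = -r on rho(I), and chi - sigma_I moves these coefficients to -1/2 and 1/2 - r: this stays
  admissible since r > 1/2 and has fewer coefficients -r, so (r,p) drops. If chi - sigma_I lies
  on F_r(mu), every mu-positive weight is lambda-positive, for a lambda-null one would put chi on
  F_r(K lambda + mu) with K large, a cocharacter > lambda; and mu >= lambda fails on rho(I),
  where the coefficient is 1/2 - r.
*)

locale finite_quiver =
  fixes I :: "'v set" and E :: "'e set" and s t :: "'e \<Rightarrow> 'v" and d :: "'v \<Rightarrow> nat"
  assumes finite_vertices: "finite I" and finite_arrows: "finite E"
    and arrow_ends: "a \<in> E \<Longrightarrow> s a \<in> I \<and> t a \<in> I"
begin

abbreviation "L \<equiv> labels E s t d"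
abbreviation "X \<equiv> idx I d"
abbreviation "w \<equiv> wt s t"

definition wcomb :: "('e \<times> nat \<times> nat \<Rightarrow> real) \<Rightarrow> real \<Rightarrow> 'v \<times> nat \<Rightarrow> real" where
  "wcomb c cc = (\<lambda>k. (\<Sum>l\<in>L. c l * w l k) + cc * tau I d k)"

definition on_face :: "real \<Rightarrow> ('v \<times> nat \<Rightarrow> int) \<Rightarrow> ('e \<times> nat \<times> nat \<Rightarrow> real) \<Rightarrow> bool" where
  "on_face r mu c \<longleftrightarrow>
     (\<forall>l\<in>L. pair I d mu (w l) > 0 \<longrightarrow> c l = - r) \<and> (\<forall>l\<in>L. pair I d mu (w l) < 0 \<longrightarrow> c l = 0)"

lemma finite_labels: "finite L"
proof -
  have "L = (SIGMA a:E. {1..d (s a)} \<times> {1..d (t a)})" by (auto simp: labels_def)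
  then show ?thesis using finite_arrows by simp
qed

lemma idx_Sigma: "X = (SIGMA i:I. {1..d i})"
  by (auto simp: idx_def)

lemma finite_idx: "finite X"
  using finite_vertices by (simp add: idx_Sigma)

lemma card_idx: "card X = (\<Sum>i\<in>I. d i)"
  using finite_vertices by (simp add: idx_Sigma card_SigmaI)

lemma label_ends_in_idx:
  assumes "(a, x, y) \<in> L" shows "(t a, y) \<in> X" "(s a, x) \<in> X"
  using assms arrow_ends[of a] by (auto simp: labels_def idx_def)

lemma mem_rW_iff:
  "v \<in> rW I E s t d r \<longleftrightarrow> (\<exists>c cc. (\<forall>l\<in>L. 0 \<le> c l \<and> c l \<le> r) \<and> v = wcomb c cc)"
  by (auto simp: rW_def wcomb_def)

lemma sum_wt: "l \<in> L \<Longrightarrow> (\<Sum>k\<in>X. w l k) = 0"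
  using finite_idx label_ends_in_idx
  by (cases l) (simp add: wt_def sum_subtractf sum.delta)

lemma sum_tau:
  assumes "X \<noteq> {}" shows "(\<Sum>k\<in>X. tau I d k) = 1"
proof -
  have "card X > 0" using assms finite_idx by (simp add: card_gt_0_iff)
  then show ?thesis using card_idx by (simp add: tau_def flip: of_nat_sum)
qed

lemma sum_wcomb:
  assumes "X \<noteq> {}" shows "(\<Sum>k\<in>X. wcomb c cc k) = cc"
proof -
  have "(\<Sum>k\<in>X. \<Sum>l\<in>L. c l * w l k) = (\<Sum>l\<in>L. c l * (\<Sum>k\<in>X. w l k))"
    by (simp add: sum.swap[of _ X] sum_distrib_left)
  also have "\<dots> = 0" by (simp add: sum_wt)
  finally show ?thesis
    using sum_tau[OF assms] by (simp add: wcomb_def sum.distrib flip: sum_distrib_left)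
qed

lemma pair_tau: "cochar_SG I d mu \<Longrightarrow> pair I d mu (tau I d) = 0"
  by (simp add: pair_def tau_def cochar_SG_def flip: sum_divide_distrib of_int_sum)

lemma pair_wcomb:
  assumes "cochar_SG I d mu"
  shows "pair I d mu (wcomb c cc) = (\<Sum>l\<in>L. c l * pair I d mu (w l))"
proof -
  have "pair I d mu (wcomb c cc)
      = (\<Sum>l\<in>L. c l * pair I d mu (w l)) + cc * pair I d mu (tau I d)"
    by (simp add: pair_def wcomb_def distrib_left sum.distrib sum_distrib_left
        sum.swap[of _ X] mult.left_commute)
  then show ?thesis using pair_tau[OF assms] by simp
qed

lemma pair_Npos:
  "pair I d mu (Npos I E s t d mu) = (\<Sum>l\<in>L. max 0 (pair I d mu (w l)))"
proof -
  have "pair I d mu (Npos I E s t d mu) = (\<Sum>l\<in>{l\<in>L. pair I d mu (w l) > 0}. pair I d mu (w l))"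
    by (simp add: pair_def Npos_def sum_distrib_left sum.swap[of _ X])
  also have "\<dots> = (\<Sum>l\<in>L. max 0 (pair I d mu (w l)))"
    using finite_labels by (auto simp: sum.inter_filter max_def intro!: sum.cong)
  finally show ?thesis .
qed

lemma wcomb_in_Fr_iff:
  assumes mu: "cochar_SG I d mu" and c: "\<forall>l\<in>L. - r \<le> c l \<and> c l \<le> 0"
  shows "wcomb c cc \<in> Fr I E s t d r mu \<longleftrightarrow> wcomb c cc \<in> rW I E s t d r \<and> on_face r mu c"
proof -
  define p where "p l = pair I d mu (w l)" for l
  define g where "g l = (c l + r) * max 0 (p l) + c l * min 0 (p l)" for l
  have "pair I d mu (wcomb c cc) + r * pair I d mu (Npos I E s t d mu) = (\<Sum>l\<in>L. g l)"
  proof -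
    have "c l * p l + r * max 0 (p l) = g l" for l
      unfolding g_def by (simp add: max_def min_def algebra_simps)
    then show ?thesis
      by (simp add: pair_wcomb[OF mu] pair_Npos sum_distrib_left flip: p_def sum.distrib)
  qed
  moreover have "0 \<le> g l" if "l \<in> L" for l
  proof -
    have "0 \<le> c l + r" using c that by force
    then have "0 \<le> (c l + r) * max 0 (p l)" by simp
    moreover have "0 \<le> c l * min 0 (p l)" using c that by (simp add: mult_nonpos_nonpos)
    ultimately show ?thesis unfolding g_def by simp
  qed
  moreover have "g l = 0 \<longleftrightarrow> (p l > 0 \<longrightarrow> c l = - r) \<and> (p l < 0 \<longrightarrow> c l = 0)" for l
    by (cases "p l > 0"; cases "p l < 0") (auto simp: g_def)
  ultimately show ?thesis
    using sum_nonneg_eq_0_iff[OF finite_labels, of g]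
    by (auto simp: Fr_def on_face_def p_def)
qed

lemma mem_rW_iff_sum:
  assumes "X \<noteq> {}"
  shows "v \<in> rW I E s t d r \<longleftrightarrow>
    (\<exists>c. (\<forall>l\<in>L. 0 \<le> c l \<and> c l \<le> r) \<and> v = wcomb c (\<Sum>k\<in>X. v k))"
  using sum_wcomb[OF assms] unfolding mem_rW_iff by metis

lemma rW_mono: "r \<le> r' \<Longrightarrow> rW I E s t d r \<subseteq> rW I E s t d r'"
  unfolding mem_rW_iff subset_iff by force

lemma rW_limit:
  assumes X: "X \<noteq> {}" and v: "\<And>n. v \<in> rW I E s t d (m + 1 / Suc n)"
  shows "v \<in> rW I E s t d m"
proof -
  \<comment> \<open>the \<open>\<tau>\<close>-coefficient is forced, so only the weight coefficients vary\<close>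
  define cc where "cc = (\<Sum>k\<in>X. v k)"
  obtain C where C: "\<And>n l. l \<in> L \<Longrightarrow> 0 \<le> C n l \<and> C n l \<le> m + 1 / Suc n"
    and v_eq: "\<And>n. v = wcomb (C n) cc"
    using v[unfolded mem_rW_iff_sum[OF X]] unfolding cc_def by metis
  have "bounded ((\<lambda>c. c l) ` range C)" if "l \<in> L" for l
  proof -
    have "(\<lambda>c. c l) ` range C \<subseteq> {0..m + 1}"
    proof clarsimp
      fix n
      have "1 / real (Suc n) \<le> 1" by simp
      then show "0 \<le> C n l \<and> C n l \<le> m + 1" using C[OF that, of n] by linarith
    qed
    then show ?thesis using bounded_subset bounded_closed_interval by blast
  qed
  then obtain c\<^sub>0 :: "'e \<times> nat \<times> nat \<Rightarrow> real" and \<sigma> where \<sigma>: "strict_mono \<sigma>"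
    and ev: "\<forall>e>0. \<forall>\<^sub>F n in sequentially. \<forall>l\<in>L. dist (C (\<sigma> n) l) (c\<^sub>0 l) < e"
    using compact_lemma_general[of L "\<lambda>c l. c l" C id, OF finite_labels] by auto
  have lim: "(\<lambda>n. C (\<sigma> n) l) \<longlonglongrightarrow> c\<^sub>0 l" if "l \<in> L" for l
    unfolding tendsto_iff using ev that by (fast elim: eventually_mono)
  have bound: "(\<lambda>n. m + 1 / Suc (\<sigma> n)) \<longlonglongrightarrow> m"
    using LIMSEQ_subseq_LIMSEQ[OF LIMSEQ_inverse_real_of_nat_add \<sigma>]
    by (simp add: comp_def inverse_eq_divide)
  have "0 \<le> c\<^sub>0 l \<and> c\<^sub>0 l \<le> m" if "l \<in> L" for l
    using LIMSEQ_le_const[OF lim[OF that]] LIMSEQ_le[OF lim[OF that] bound] C[OF that] by auto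
  moreover have "v = wcomb c\<^sub>0 cc"
  proof
    fix k
    have "(\<lambda>n. wcomb (C (\<sigma> n)) cc k) \<longlonglongrightarrow> wcomb c\<^sub>0 cc k"
      unfolding wcomb_def by (intro tendsto_intros lim)
    then show "v k = wcomb c\<^sub>0 cc k"
      by (simp flip: v_eq add: LIMSEQ_const_iff)
  qed
  ultimately show ?thesis unfolding mem_rW_iff by blast
qed

text \<open>\<open>r_inv\<close> is a \<open>LEAST\<close> over the reals, which is only meaningful once the infimum is
  shown to be attained (lemma \<open>rW_limit\<close>).\<close>

lemma r_inv_le:
  assumes X: "X \<noteq> {}" and v: "v \<in> rW I E s t d r" and r: "0 \<le> r"
  shows "r_inv I E s t d v \<le> r"
proof -
  define R where "R = {x. 0 \<le> x \<and> v \<in> rW I E s t d x}"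
  have "r \<in> R" using v r by (simp add: R_def)
  have bdd: "bdd_below R" by (rule bdd_belowI[of _ 0]) (simp add: R_def)
  have "0 \<le> Inf R" using \<open>r \<in> R\<close> by (intro cInf_greatest) (auto simp: R_def)
  moreover have "v \<in> rW I E s t d (Inf R)"
  proof (rule rW_limit[OF X])
    fix n
    obtain x where "x \<in> R" "x < Inf R + 1 / Suc n"
      using cInf_lessD[of R "Inf R + 1 / Suc n"] \<open>r \<in> R\<close> by force
    moreover from \<open>x \<in> R\<close> have "v \<in> rW I E s t d x" by (simp add: R_def)
    ultimately show "v \<in> rW I E s t d (Inf R + 1 / Suc n)"
      using rW_mono by (meson less_imp_le subsetD)
  qed
  moreover have "\<And>y. 0 \<le> y \<and> v \<in> rW I E s t d y \<Longrightarrow> Inf R \<le> y"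
    using bdd by (simp add: R_def cInf_lower)
  ultimately have "r_inv I E s t d v = Inf R"
    unfolding r_inv_def by (blast intro: Least_equality)
  then show ?thesis using \<open>r \<in> R\<close> bdd by (simp add: cInf_lower)
qed

lemma pair_wt_Ints: "pair I d mu (w l) \<in> \<int>"
  unfolding pair_def by (intro Ints_sum Ints_mult) (auto simp: wt_def split: prod.split)

lemma pair_lin: "pair I d (\<lambda>k. K * lam k + mu k) v = of_int K * pair I d lam v + pair I d mu v"
  by (simp add: pair_def distrib_right sum.distrib sum_distrib_left mult.assoc)

lemma exists_refining_cocharacter:
  assumes lam: "cochar_SG I d lam" and mu: "cochar_SG I d mu"
  obtains nu where "cochar_SG I d nu"
    and "\<And>l. l \<in> L \<Longrightarrow> pair I d lam (w l) > 0 \<Longrightarrow> pair I d nu (w l) > 0"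
    and "\<And>l. l \<in> L \<Longrightarrow> pair I d lam (w l) < 0 \<Longrightarrow> pair I d nu (w l) < 0"
    and "\<And>l. pair I d lam (w l) = 0 \<Longrightarrow> pair I d nu (w l) = pair I d mu (w l)"
proof
  \<comment> \<open>\<open>\<langle>\<lambda>, \<beta>\<rangle>\<close> is an integer, so \<open>K\<close> makes \<open>K\<lambda>\<close> dominate \<open>\<mu>\<close> wherever \<open>\<langle>\<lambda>, \<beta>\<rangle> \<noteq> 0\<close>\<close>
  define K where "K = 1 + \<lceil>\<Sum>l\<in>L. \<bar>pair I d mu (w l)\<bar>\<rceil>"
  define nu where "nu k = K * lam k + mu k" for k
  have pair_nu: "pair I d nu (w l) = of_int K * pair I d lam (w l) + pair I d mu (w l)" for l
    unfolding nu_def by (rule pair_lin)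
  have K: "\<bar>pair I d mu (w l)\<bar> < of_int K" if "l \<in> L" for l
  proof -
    have "\<bar>pair I d mu (w l)\<bar> \<le> (\<Sum>l\<in>L. \<bar>pair I d mu (w l)\<bar>)"
      using that finite_labels by (intro member_le_sum) auto
    then show ?thesis unfolding K_def by linarith
  qed
  have "0 \<le> (\<Sum>l\<in>L. \<bar>pair I d mu (w l)\<bar>)" by (simp add: sum_nonneg)
  then have K_nonneg: "0 \<le> K" unfolding K_def using zero_le_ceiling by linarith
  have "(\<Sum>k\<in>X. nu k) = K * (\<Sum>k\<in>X. lam k) + (\<Sum>k\<in>X. mu k)"
    unfolding nu_def by (simp add: sum.distrib sum_distrib_left)
  then show "cochar_SG I d nu" using lam mu by (simp add: cochar_SG_def nu_def)
  show "pair I d nu (w l) > 0" if "l \<in> L" "pair I d lam (w l) > 0" for l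
  proof -
    have "pair I d lam (w l) \<ge> 1" using that(2) pair_wt_Ints[of lam l] by (auto elim!: Ints_cases)
    then have "of_int K \<le> of_int K * pair I d lam (w l)"
      using mult_left_mono[of 1 _ "real_of_int K"] K_nonneg by simp
    then show ?thesis using K[OF that(1)] pair_nu[of l] by linarith
  qed
  show "pair I d nu (w l) < 0" if "l \<in> L" "pair I d lam (w l) < 0" for l
  proof -
    have "pair I d lam (w l) \<le> - 1" using that(2) pair_wt_Ints[of lam l] by (auto elim!: Ints_cases)
    then have "of_int K * pair I d lam (w l) \<le> - of_int K"
      using mult_left_mono[of _ "- 1" "real_of_int K"] K_nonneg by simp
    then show ?thesis using K[OF that(1)] pair_nu[of l] by linarith
  qed
  show "pair I d nu (w l) = pair I d mu (w l)" if "pair I d lam (w l) = 0" for l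
    using that pair_nu[of l] by simp
qed

lemma Fr_int_null_weights:
  assumes lam: "cochar_SG I d lam" and mu: "cochar_SG I d mu"
    and c: "\<forall>l\<in>L. - r \<le> c l \<and> c l \<le> 0" and chi: "wcomb c cc \<in> Fr_int I E s t d r lam"
    and null_face: "\<And>l. l \<in> L \<Longrightarrow> pair I d lam (w l) = 0 \<Longrightarrow>
      (pair I d mu (w l) > 0 \<longrightarrow> c l = - r) \<and> (pair I d mu (w l) < 0 \<longrightarrow> c l = 0)"
    and l: "l \<in> L" "pair I d lam (w l) = 0"
  shows "pair I d mu (w l) \<le> 0"
proof (rule ccontr)
  assume "\<not> pair I d mu (w l) \<le> 0"
  obtain nu where nu: "cochar_SG I d nu"
    and pos: "\<And>l. l \<in> L \<Longrightarrow> pair I d lam (w l) > 0 \<Longrightarrow> pair I d nu (w l) > 0"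
    and neg: "\<And>l. l \<in> L \<Longrightarrow> pair I d lam (w l) < 0 \<Longrightarrow> pair I d nu (w l) < 0"
    and null: "\<And>l. pair I d lam (w l) = 0 \<Longrightarrow> pair I d nu (w l) = pair I d mu (w l)"
    using exists_refining_cocharacter[OF lam mu] by blast
  have chi_lam: "wcomb c cc \<in> rW I E s t d r" "on_face r lam c"
    using chi wcomb_in_Fr_iff[OF lam c] by (auto simp: Fr_int_def)
  have "on_face r nu c"
    unfolding on_face_def
  proof (intro conjI ballI impI)
    fix l' assume "l' \<in> L" "pair I d nu (w l') > 0"
    then show "c l' = - r"
      using chi_lam(2) null_face[of l'] neg[of l'] null[of l']
      by (cases "pair I d lam (w l')" "0::real" rule: linorder_cases) (auto simp: on_face_def)
  next
    fix l' assume "l' \<in> L" "pair I d nu (w l') < 0"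
    then show "c l' = 0"
      using chi_lam(2) null_face[of l'] pos[of l'] null[of l']
      by (cases "pair I d lam (w l')" "0::real" rule: linorder_cases) (auto simp: on_face_def)
  qed
  then have "wcomb c cc \<in> Fr I E s t d r nu"
    using chi_lam(1) wcomb_in_Fr_iff[OF nu c] by blast
  moreover have "cocha_gt I E s t d nu lam"
  proof -
    have "pair I d nu (w l) > 0" using l null \<open>\<not> pair I d mu (w l) \<le> 0\<close> by simp
    then have "\<not> cocha_geq I E s t d lam nu" using l by (auto simp: cocha_geq_def)
    then show ?thesis using pos by (simp add: cocha_gt_def cocha_geq_def)
  qed
  ultimately show False
    using chi nu by (auto simp: Fr_int_def)
qed

lemma p_inv_le:
  assumes "\<forall>l\<in>L. - r_inv I E s t d v \<le> c l \<and> c l \<le> 0" and "v = wcomb c cc"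
  shows "p_inv I E s t d v \<le> card {l\<in>L. c l = - r_inv I E s t d v}"
  unfolding p_inv_def Let_def using assms by (intro Least_le) (auto simp: wcomb_def)

end

locale symmetric_weights = finite_quiver +
  fixes \<rho>
  assumes reflect_bij: "bij_betw \<rho> (labels E s t d) (labels E s t d)"
    and wt_reflect: "l \<in> labels E s t d \<Longrightarrow> wt s t (\<rho> l) k = - wt s t l k"
begin

lemma pair_wt_reflect: "l \<in> L \<Longrightarrow> pair I d mu (w (\<rho> l)) = - pair I d mu (w l)"
  by (simp add: pair_def wt_reflect sum_negf)

lemma sum_wt_reflect_image:
  assumes "S \<subseteq> L" shows "(\<Sum>l\<in>\<rho> ` S. w l k) = - (\<Sum>l\<in>S. w l k)"
proof -
  have "inj_on \<rho> S" using reflect_bij assms by (meson bij_betw_def inj_on_subset)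
  then have "(\<Sum>l\<in>\<rho> ` S. w l k) = (\<Sum>l\<in>S. w (\<rho> l) k)" by (simp add: sum.reindex)
  also have "\<dots> = (\<Sum>l\<in>S. - w l k)" using assms by (intro sum.cong) (auto simp: wt_reflect)
  finally show ?thesis by (simp add: sum_negf)
qed

lemma wcomb_reflect: "wcomb (\<lambda>l. - c (\<rho> l)) cc = wcomb c cc"
proof -
  have "(\<Sum>l\<in>L. - c (\<rho> l) * w l k) = (\<Sum>l\<in>L. c (\<rho> l) * w (\<rho> l) k)" for k
    by (rule sum.cong) (simp_all add: wt_reflect)
  also have "\<dots> k = (\<Sum>l\<in>L. c l * w l k)" for k
    using sum.reindex_bij_betw[OF reflect_bij, of "\<lambda>l. c l * w l k"] .
  finally show ?thesis by (simp add: wcomb_def)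
qed

lemma mem_rW_iff_nonpos:
  "v \<in> rW I E s t d r \<longleftrightarrow> (\<exists>c cc. (\<forall>l\<in>L. - r \<le> c l \<and> c l \<le> 0) \<and> v = wcomb c cc)"
  unfolding mem_rW_iff
proof (intro iffI; elim exE conjE)
  fix c cc assume c: "\<forall>l\<in>L. 0 \<le> c l \<and> c l \<le> r" and v: "v = wcomb c cc"
  have "\<forall>l\<in>L. - r \<le> - c (\<rho> l) \<and> - c (\<rho> l) \<le> 0"
    using c bij_betwE[OF reflect_bij] by force
  then show "\<exists>c cc. (\<forall>l\<in>L. - r \<le> c l \<and> c l \<le> 0) \<and> v = wcomb c cc"
    using v wcomb_reflect[of c cc] by (intro exI[of _ "\<lambda>l. - c (\<rho> l)"] exI[of _ cc]) simp
next
  fix c cc assume c: "\<forall>l\<in>L. - r \<le> c l \<and> c l \<le> 0" and v: "v = wcomb c cc"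
  have "\<forall>l\<in>L. 0 \<le> - c (\<rho> l) \<and> - c (\<rho> l) \<le> r"
    using c bij_betwE[OF reflect_bij] by force
  then show "\<exists>c cc. (\<forall>l\<in>L. 0 \<le> c l \<and> c l \<le> r) \<and> v = wcomb c cc"
    using v wcomb_reflect[of c cc] by (intro exI[of _ "\<lambda>l. - c (\<rho> l)"] exI[of _ cc]) simp
qed

lemma p_inv_witness:
  assumes "v \<in> rW I E s t d (r_inv I E s t d v)"
  obtains c cc where "\<forall>l\<in>L. - r_inv I E s t d v \<le> c l \<and> c l \<le> 0" and "v = wcomb c cc"
    and "card {l\<in>L. c l = - r_inv I E s t d v} = p_inv I E s t d v"
proof -
  let ?r = "r_inv I E s t d v"
  have "\<exists>n c cc. (\<forall>l\<in>L. - ?r \<le> c l \<and> c l \<le> 0) \<and> v = wcomb c cc \<and> card {l\<in>L. c l = - ?r} = n"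
    using assms unfolding mem_rW_iff_nonpos by blast
  from LeastI_ex[OF this] show ?thesis
    using that unfolding p_inv_def Let_def wcomb_def by blast
qed

text \<open>Since \<open>\<rho>\<close> negates weights, \<open>\<sigma>\<^sub>S\<close> is half the sum of the weights in \<open>S\<close> minus half the
  sum of those in \<open>\<rho> ` S\<close>.\<close>

definition shift :: "_ set \<Rightarrow> (_ \<Rightarrow> real) \<Rightarrow> _ \<Rightarrow> real" where
  "shift S c l = c l + (if l \<in> \<rho> ` S then 1/2 else if l \<in> S then - 1/2 else 0)"

lemma wcomb_shift:
  assumes S: "S \<subseteq> L" and disj: "S \<inter> \<rho> ` S = {}"
  shows "wcomb (shift S c) cc = (\<lambda>k. wcomb c cc k - (\<Sum>l\<in>S. w l k))"
proof
  fix k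
  have "\<rho> ` S \<subseteq> L" using S bij_betwE[OF reflect_bij] by blast
  have "shift S c l * w l k = c l * w l k + (if l \<in> \<rho> ` S then w l k / 2 else 0)
      - (if l \<in> S then w l k / 2 else 0)" for l
    using disj by (auto simp: shift_def algebra_simps)
  then have "(\<Sum>l\<in>L. shift S c l * w l k)
      = (\<Sum>l\<in>L. c l * w l k) + (\<Sum>l\<in>\<rho> ` S. w l k / 2) - (\<Sum>l\<in>S. w l k / 2)"
    using S \<open>\<rho> ` S \<subseteq> L\<close>
    by (simp add: sum.distrib sum_subtractf Int_absorb1 flip: sum.inter_restrict[OF finite_labels])
  also have "\<dots> = (\<Sum>l\<in>L. c l * w l k) - (\<Sum>l\<in>S. w l k)"
    using sum_wt_reflect_image[OF S] by (simp flip: sum_divide_distrib)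
  finally show "wcomb (shift S c) cc k = wcomb c cc k - (\<Sum>l\<in>S. w l k)"
    by (simp add: wcomb_def)
qed

context
  fixes r lam c cc S
  assumes r_gt: "r > 1/2" and lam: "cochar_SG I d lam"
    and coeffs: "\<forall>l\<in>L. - r \<le> c l \<and> c l \<le> 0"
    and chi_int: "wcomb c cc \<in> Fr_int I E s t d r lam"
    and S_sub: "S \<subseteq> L" and S_ne: "S \<noteq> {}" and S_neg: "\<forall>l\<in>S. pair I d lam (w l) < 0"
begin

lemma reflect_image_sub: "\<rho> ` S \<subseteq> L"
  using S_sub bij_betwE[OF reflect_bij] by blast

lemma reflect_image_pos: "l \<in> \<rho> ` S \<Longrightarrow> pair I d lam (w l) > 0"
  using S_neg S_sub pair_wt_reflect by force

lemma disjoint_reflect_image: "S \<inter> \<rho> ` S = {}"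
  using S_neg reflect_image_pos by force

lemma coeffs_on_face: "on_face r lam c"
  using chi_int wcomb_in_Fr_iff[OF lam coeffs] by (simp add: Fr_int_def)

lemma coeff_on_S: "l \<in> S \<Longrightarrow> c l = 0"
  using coeffs_on_face S_neg S_sub by (auto simp: on_face_def)

lemma coeff_on_reflect_image:
  assumes "l \<in> \<rho> ` S" shows "c l = - r"
  using coeffs_on_face reflect_image_pos[OF assms] reflect_image_sub assms
  unfolding on_face_def by blast

lemma shift_on_S: "l \<in> S \<Longrightarrow> shift S c l = - 1/2"
  using coeff_on_S disjoint_reflect_image by (auto simp: shift_def)

lemma shift_on_reflect_image: "l \<in> \<rho> ` S \<Longrightarrow> shift S c l = 1/2 - r"
  using coeff_on_reflect_image by (simp add: shift_def)

lemma shift_outside: "l \<notin> S \<Longrightarrow> l \<notin> \<rho> ` S \<Longrightarrow> shift S c l = c l"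
  by (simp add: shift_def)

lemma shift_coeffs: "\<forall>l\<in>L. - r \<le> shift S c l \<and> shift S c l \<le> 0"
proof
  fix l assume "l \<in> L"
  consider "l \<in> S" | "l \<in> \<rho> ` S" | "l \<notin> S" "l \<notin> \<rho> ` S" by blast
  then show "- r \<le> shift S c l \<and> shift S c l \<le> 0"
    by cases (use r_gt coeffs \<open>l \<in> L\<close> shift_on_S shift_on_reflect_image shift_outside in auto)
qed

lemma shift_in_rW: "wcomb (shift S c) cc \<in> rW I E s t d r"
  using shift_coeffs unfolding mem_rW_iff_nonpos by blast

lemma shift_null_face:
  assumes "on_face r mu (shift S c)" and "l \<in> L" and "pair I d lam (w l) = 0"
  shows "(pair I d mu (w l) > 0 \<longrightarrow> c l = - r) \<and> (pair I d mu (w l) < 0 \<longrightarrow> c l = 0)"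
proof -
  have "l \<notin> S" using assms(3) S_neg by force
  moreover have "l \<notin> \<rho> ` S" using assms(3) reflect_image_pos[of l] by auto
  ultimately have "shift S c l = c l" by (rule shift_outside)
  then show ?thesis using assms(1,2) unfolding on_face_def by metis
qed

lemma shift_face_pos_imp_pos:
  assumes mu: "cochar_SG I d mu" and face_mu: "on_face r mu (shift S c)"
    and l: "l \<in> L" and mu_pos: "pair I d mu (w l) > 0"
  shows "pair I d lam (w l) > 0"
proof (cases "l \<in> \<rho> ` S")
  case True
  then show ?thesis by (rule reflect_image_pos)
next
  case False
  have shift_l: "shift S c l = - r" using face_mu l mu_pos by (simp add: on_face_def)
  have "l \<notin> S"
  proof
    assume "l \<in> S"
    then show False using shift_l shift_on_S r_gt by simp
  qed
  with False shift_l have c_l: "c l = - r" using shift_outside by simp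
  have "\<not> pair I d lam (w l) < 0"
  proof
    assume "pair I d lam (w l) < 0"
    then have "c l = 0" using coeffs_on_face l unfolding on_face_def by blast
    then show False using c_l r_gt by simp
  qed
  moreover have "pair I d lam (w l) \<noteq> 0"
  proof
    assume null: "pair I d lam (w l) = 0"
    have "pair I d mu (w l) \<le> 0"
      using Fr_int_null_weights[OF lam mu coeffs chi_int shift_null_face[OF face_mu] l null] .
    then show False using mu_pos by simp
  qed
  ultimately show ?thesis by linarith
qed

lemma shift_Fr_cocha_gt:
  assumes mu: "cochar_SG I d mu" and psi: "wcomb (shift S c) cc \<in> Fr I E s t d r mu"
  shows "cocha_gt I E s t d lam mu"
proof -
  have face_mu: "on_face r mu (shift S c)"
    using psi wcomb_in_Fr_iff[OF mu shift_coeffs] by blast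
  then have "cocha_geq I E s t d lam mu"
    using shift_face_pos_imp_pos[OF mu] by (simp add: cocha_geq_def)
  moreover have "\<not> cocha_geq I E s t d mu lam"
  proof
    assume "cocha_geq I E s t d mu lam"
    obtain l where "l \<in> S" using S_ne by blast
    then have "\<rho> l \<in> \<rho> ` S" by blast
    then have "pair I d mu (w (\<rho> l)) > 0"
      using \<open>cocha_geq I E s t d mu lam\<close> reflect_image_pos reflect_image_sub
      unfolding cocha_geq_def by blast
    then have "shift S c (\<rho> l) = - r"
      using face_mu reflect_image_sub \<open>\<rho> l \<in> \<rho> ` S\<close> unfolding on_face_def by blast
    then show False using shift_on_reflect_image[OF \<open>\<rho> l \<in> \<rho> ` S\<close>] by simp
  qed
  ultimately show ?thesis by (simp add: cocha_gt_def)
qed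

lemma shift_rp_less:
  assumes X: "X \<noteq> {}"
  shows "rp_less (r_inv I E s t d (wcomb (shift S c) cc), p_inv I E s t d (wcomb (shift S c) cc))
    (r, card {l\<in>L. c l = - r})"
proof -
  let ?psi = "wcomb (shift S c) cc"
  have r_le: "r_inv I E s t d ?psi \<le> r"
    using r_inv_le[OF X shift_in_rW] r_gt by simp
  show ?thesis
  proof (cases "r_inv I E s t d ?psi = r")
    case True
    have shifted_count: "{l\<in>L. shift S c l = - r} = {l\<in>L. c l = - r} - \<rho> ` S"
    proof -
      have "shift S c l = - r \<longleftrightarrow> c l = - r \<and> l \<notin> \<rho> ` S" for l
        by (cases "l \<in> S"; cases "l \<in> \<rho> ` S")
          (use r_gt coeff_on_S shift_on_S shift_on_reflect_image shift_outside in auto)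
      then show ?thesis by blast
    qed
    have "\<rho> ` S \<subseteq> {l\<in>L. c l = - r}" "\<rho> ` S \<noteq> {}"
      using coeff_on_reflect_image reflect_image_sub S_ne by auto
    then have "card {l\<in>L. shift S c l = - r} < card {l\<in>L. c l = - r}"
      unfolding shifted_count using finite_labels by (intro psubset_card_mono) auto
    moreover have "p_inv I E s t d ?psi \<le> card {l\<in>L. shift S c l = - r}"
      using p_inv_le[of ?psi "shift S c" cc] shift_coeffs True by simp
    ultimately show ?thesis using True by (simp add: rp_less_def)
  qed (use r_le in \<open>simp add: rp_less_def\<close>)
qed

end

end

lemma symmetric_quiver_arrow_reversal:
  assumes "symmetric_quiver I E s t"
  obtains f where "inj_on f E" and "\<And>a. a \<in> E \<Longrightarrow> f a \<in> E \<and> s (f a) = t a \<and> t (f a) = s a"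
proof -
  define A where "A i j = {a\<in>E. s a = i \<and> t a = j}" for i j
  have "\<exists>h. bij_betw h (A i j) (A j i)" for i j
  proof -
    have "finite (A i j)" "finite (A j i)" using assms by (simp_all add: A_def symmetric_quiver_def)
    moreover have "card (A i j) = card (A j i)" using assms by (simp add: A_def symmetric_quiver_def)
    ultimately show ?thesis by (rule finite_same_card_bij)
  qed
  then obtain h where h: "\<And>i j. bij_betw (h i j) (A i j) (A j i)" by metis
  define f where "f a = h (s a) (t a) a" for a
  have f_in: "f a \<in> A (t a) (s a)" if "a \<in> E" for a
    using bij_betwE[OF h] that by (simp add: f_def A_def)
  have "inj_on f E"
  proof (rule inj_onI)
    fix a b assume ab: "a \<in> E" "b \<in> E" "f a = f b"
    then have "s a = s b" "t a = t b" using f_in[of a] f_in[of b] by (auto simp: A_def)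
    moreover have "a \<in> A (s a) (t a)" "b \<in> A (s a) (t a)" using ab calculation by (auto simp: A_def)
    ultimately show "a = b"
      using ab(3) bij_betw_imp_inj_on[OF h] by (simp add: f_def inj_on_def)
  qed
  then show ?thesis using that f_in by (auto simp: A_def)
qed

lemma symmetric_quiver_imp_symmetric_weights:
  fixes E :: "'e set" and d :: "'v \<Rightarrow> nat"
  assumes sym: "symmetric_quiver I E s t"
  shows "\<exists>\<rho>. symmetric_weights I E s t d \<rho>"
proof -
  have quiver: "finite_quiver I E s t"
    using sym by unfold_locales (auto simp: symmetric_quiver_def)
  interpret finite_quiver I E s t d by (rule quiver)
  obtain f where f_inj: "inj_on f E" and f: "\<And>a. a \<in> E \<Longrightarrow> f a \<in> E \<and> s (f a) = t a \<and> t (f a) = s a"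
    using symmetric_quiver_arrow_reversal[OF sym] by blast
  define \<rho> :: "'e \<times> nat \<times> nat \<Rightarrow> 'e \<times> nat \<times> nat" where "\<rho> = (\<lambda>(a, x, y). (f a, y, x))"
  have into: "\<rho> ` L \<subseteq> L" using f by (auto simp: \<rho>_def labels_def)
  have "inj_on \<rho> L" using f_inj by (auto simp: \<rho>_def labels_def inj_on_def)
  then have "bij_betw \<rho> L L"
    using endo_inj_surj[OF finite_labels into] by (simp add: bij_betw_def)
  moreover have "w (\<rho> l) k = - w l k" if "l \<in> L" for l k
    using that f by (auto simp: \<rho>_def labels_def wt_def)
  ultimately show ?thesis
    using quiver by (blast intro: symmetric_weights.intro symmetric_weights_axioms.intro)
qed

lemma Qd_connected_idx_nonempty:
  assumes "Qd_connected I E s t d" shows "idx I d \<noteq> {}"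
proof -
  obtain i where "i \<in> I" "d i \<noteq> 0" using assms by (auto simp: Qd_connected_def supp_vertices_def)
  then have "(i, 1) \<in> idx I d" by (simp add: idx_def)
  then show ?thesis by blast
qed

theorem proposition3p6:
  fixes I :: "'v set" and E :: "'e set" and s t :: "'e \<Rightarrow> 'v" and d :: "'v \<Rightarrow> nat"
    and chi :: "'v \<times> nat \<Rightarrow> real" and lam :: "'v \<times> nat \<Rightarrow> int"
    and S :: "('e \<times> nat \<times> nat) set" and r :: real
  assumes "symmetric_quiver I E s t"
    and "Qd_connected I E s t d"
    and "\<not> Qd_trivial I E s t d"
    and "dominant_weight I d chi"
    and "r = r_inv I E s t d chi"
    and "r > 1/2"
    and "cochar_SG I d lam" and "antidominant I d lam"
    and "chi \<in> Fr_int I E s t d r lam"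
    and "S \<subseteq> labels E s t d" and "S \<noteq> {}"
    and "\<forall>l\<in>S. pair I d lam (wt s t l) < 0"
  shows "(let sigma = (\<lambda>k. \<Sum>l\<in>S. wt s t l k); psi = (\<lambda>k. chi k - sigma k) in
           psi \<in> rW I E s t d r \<and>
           (\<forall>mu. cochar_SG I d mu \<and> psi \<in> Fr_int I E s t d r mu \<longrightarrow> cocha_gt I E s t d lam mu) \<and>
           rp_less (r_inv I E s t d psi, p_inv I E s t d psi) (r, p_inv I E s t d chi))"
proof -
  obtain \<rho> where "symmetric_weights I E s t d \<rho>"
    using symmetric_quiver_imp_symmetric_weights[OF assms(1)] by blast
  then interpret symmetric_weights I E s t d \<rho> .
  have "chi \<in> rW I E s t d r" using assms(9) by (simp add: Fr_int_def Fr_def)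
  then obtain c cc where coeffs: "\<forall>l\<in>L. - r \<le> c l \<and> c l \<le> 0" and chi: "chi = wcomb c cc"
    and count: "card {l\<in>L. c l = - r} = p_inv I E s t d chi"
    using p_inv_witness[of chi, folded assms(5)] by blast
  note setting = assms(6,7) coeffs assms(9)[unfolded chi] assms(10-12)
  have psi: "(\<lambda>k. chi k - (\<Sum>l\<in>S. wt s t l k)) = wcomb (shift S c) cc"
    using wcomb_shift[OF assms(10) disjoint_reflect_image[OF setting]] by (simp add: chi)
  show ?thesis
    unfolding Let_def psi count[symmetric]
    using shift_in_rW[OF setting] shift_Fr_cocha_gt[OF setting]
      shift_rp_less[OF setting Qd_connected_idx_nonempty[OF assms(2)]]
    by (simp add: Fr_int_def)
qed

end
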